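(* Consider the knapsack auction game described in the context, with the Greedy allocation rule. In the uniform-price (UP) auction, bidding truthfully (submitting $B_i = v_i$, i.e. per-unit bid $b_i = v_i/k_i$) is a weakly dominant strategy for every bidder $i$, so the UP auction is dominant-strategy incentive compatible. Moreover, the UP payment rule is the unique payment rule which, combined with the Greedy allocation rule, yields a dominant-strategy incentive-compatible sealed-bid mechanism (under the normalization that a bidder who bids $0$ pays $0$). That is, the UP auction has the unique dominant-strategy incentive-compatible equilibrium of the knapsack auction game.
   Context: A seller owns a knapsack of capacity $K>0$ and sells its space to bidders $N=\{1,\dots,n\}$. Bidder $i$ owns an indivisible object of size $k_i<K$; sizes are public and $\sum_{i\in N}k_i>K$. Bidder $i$ obtains value $v_i$ if its object is packed and $0$ otherwise; $v_i$ is privately known to $i$, and values are drawn from a commonly known continuous, twice differentiable distribution $F$ with density $f<\infty$. Each bidder $i$ submits a bid $B_i$ for its object; its per-unit bid is $b_i=B_i/k_i$. Per-unit bids are assumed distinct and bidders are indexed so that $b_1>b_2>\dots>b_n$. Greedy allocation rule: objects are packed in decreasing order of per-unit bid, starting from the highest, and the auctioneer stops as soon as the next object in this order does not fit in the remaining capacity (no further, lower-ranked objects are considered). Thus the winning set is $W=\{1,\dots,m\}$ with $\sum_{j\in W}k_j\le K$ and $\sum_{j\in W}k_j+k_{m+1}>K$. UP payment rule: every packed bidder $i$ pays $k_i b_{m+1}$, where $b_{m+1}$ is the per-unit bid of the first bidder in the ranking whose object is not packed; unpacked bidders pay nothing. Bidder $i$'s payoff is $v_i$ minus its payment if packed, and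 $0$ otherwise. A mechanism (allocation rule, payment rule) is dominant-strategy incentive compatible (DSIC) if truthful bidding is a weakly dominant strategy for every bidder. *)

theory Defs
  imports Complex_Main
begin

definition per_unit :: "('a \<Rightarrow> real) \<Rightarrow> ('a \<Rightarrow> real) \<Rightarrow> 'a \<Rightarrow> real" where
  "per_unit k B j = B j / k j"

definition valid_profile :: "'a set \<Rightarrow> ('a \<Rightarrow> real) \<Rightarrow> ('a \<Rightarrow> real) \<Rightarrow> bool" where
  "valid_profile N k B \<longleftrightarrow> (\<forall>j\<in>N. 0 \<le> B j) \<and> inj_on (per_unit k B) N"

text \<open>Greedy allocation: objects are packed in decreasing order of per-unit bid and
the auctioneer stops at the first object that does not fit.\<close>
definition packed :: "'a set \<Rightarrow> ('a \<Rightarrow> real) \<Rightarrow> real \<Rightarrow> ('a \<Rightarrow> real) \<Rightarrow> 'a \<Rightarrow> bool" where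
  "packed N k K B i \<longleftrightarrow>
     (\<Sum>j\<in>{j\<in>N. per_unit k B i \<le> per_unit k B j}. k j) \<le> K"

definition clearing_price :: "'a set \<Rightarrow> ('a \<Rightarrow> real) \<Rightarrow> real \<Rightarrow> ('a \<Rightarrow> real) \<Rightarrow> real" where
  "clearing_price N k K B = Max (per_unit k B ` {j\<in>N. \<not> packed N k K B j})"

definition up_payment :: "'a set \<Rightarrow> ('a \<Rightarrow> real) \<Rightarrow> real \<Rightarrow> ('a \<Rightarrow> real) \<Rightarrow> 'a \<Rightarrow> real" where
  "up_payment N k K B i = (if packed N k K B i then k i * clearing_price N k K B else 0)"

definition payoff :: "'a set \<Rightarrow> ('a \<Rightarrow> real) \<Rightarrow> real \<Rightarrow> (('a \<Rightarrow> real) \<Rightarrow> 'a \<Rightarrow> real)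
                     \<Rightarrow> real \<Rightarrow> ('a \<Rightarrow> real) \<Rightarrow> 'a \<Rightarrow> real" where
  "payoff N k K P v B i = (if packed N k K B i then v else 0) - P B i"

definition dsic :: "'a set \<Rightarrow> ('a \<Rightarrow> real) \<Rightarrow> real \<Rightarrow> (('a \<Rightarrow> real) \<Rightarrow> 'a \<Rightarrow> real) \<Rightarrow> bool" where
  "dsic N k K P \<longleftrightarrow>
     (\<forall>B i v b. i \<in> N \<longrightarrow> valid_profile N k (B(i := v)) \<longrightarrow> valid_profile N k (B(i := b)) \<longrightarrow>
        payoff N k K P v (B(i := b)) i \<le> payoff N k K P v (B(i := v)) i)"

definition zero_bid_pays_zero :: "'a set \<Rightarrow> ('a \<Rightarrow> real) \<Rightarrow> (('a \<Rightarrow> real) \<Rightarrow> 'a \<Rightarrow> real) \<Rightarrow> bool" where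
  "zero_bid_pays_zero N k P \<longleftrightarrow>
     (\<forall>B i. i \<in> N \<longrightarrow> valid_profile N k B \<longrightarrow> B i = 0 \<longrightarrow> P B i = 0)"

end

theory Submission
  imports Defs
begin

text \<open>Greedy is monotone in a bidder's own bid, with threshold the clearing price: a packed
bidder stays packed, and leaves the clearing price unchanged, as long as its per-unit bid stays
above it, and any bid below it is rejected. UP charges a packed bidder exactly this threshold,
so overbidding can only add a loss-making win and underbidding can only forfeit a profitable one.

Conversely, under any DSIC payment rule a bidder's payment depends only on whether it is
packed, and the extra payment for being packed lies between any rejected bid and any accepted
bid. Approaching the threshold from both sides, avoiding the finitely many bids that would tie,
pins the payment of a packed bidder to its size times the clearing price.\<close>

lemma per_unit_update:
  "per_unit k (B(i := x)) j = (if j = i then x / k i else per_unit k B j)"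
  by (simp add: per_unit_def)

lemma valid_profile_update:
  assumes "valid_profile N k B" "0 \<le> x" "x / k i \<notin> per_unit k B ` (N - {i})"
  shows "valid_profile N k (B(i := x))"
proof -
  have "\<forall>j\<in>N - {i}. per_unit k B j \<noteq> x / k i"
    using assms(3) by (metis imageI)
  with assms(1,2) show ?thesis
    unfolding valid_profile_def inj_on_def by (auto simp: per_unit_update split: if_splits)
qed

lemma exists_off_finite_between:
  fixes a b :: real
  assumes "a < b" "finite F"
  obtains x where "a < x" "x < b" "x \<notin> F"
proof -
  have "infinite ({a<..<b} - F)"
    using assms by (simp add: Diff_infinite_finite)
  then obtain x where "x \<in> {a<..<b} - F"
    by (metis ex_in_conv finite.emptyI)
  then show ?thesis using that by auto
qed

lemma eq_if_squeezed_off_finite: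
  fixes p a :: real
  assumes "finite F" "0 < a"
    and above: "\<And>x. x \<notin> F \<Longrightarrow> a < x \<Longrightarrow> p \<le> x"
    and below: "\<And>x. x \<notin> F \<Longrightarrow> 0 < x \<Longrightarrow> x < a \<Longrightarrow> x \<le> p"
  shows "p = a"
proof (rule antisym)
  show "p \<le> a"
  proof (rule ccontr)
    assume "\<not> p \<le> a"
    then obtain x where "a < x" "x < p" "x \<notin> F"
      using exists_off_finite_between \<open>finite F\<close> by (metis not_le)
    with above show False by force
  qed
  show "a \<le> p"
  proof (rule ccontr)
    assume "\<not> a \<le> p"
    then have "max 0 p < a" using \<open>0 < a\<close> by simp
    then obtain x where "max 0 p < x" "x < a" "x \<notin> F"
      using exists_off_finite_between \<open>finite F\<close> by blast
    with below show False by force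
  qed
qed

lemma dsic_payment_eq_if_same_allocation:
  assumes "dsic N k K P" "i \<in> N"
    and "valid_profile N k (B(i := x))" "valid_profile N k (B(i := y))"
    and "packed N k K (B(i := x)) i \<longleftrightarrow> packed N k K (B(i := y)) i"
  shows "P (B(i := x)) i = P (B(i := y)) i"
proof -
  have "payoff N k K P x (B(i := y)) i \<le> payoff N k K P x (B(i := x)) i"
    and "payoff N k K P y (B(i := x)) i \<le> payoff N k K P y (B(i := y)) i"
    using assms(1-4) unfolding dsic_def by blast+
  with assms(5) show ?thesis by (simp add: payoff_def)
qed

lemma dsic_payment_gap_between_bids:
  assumes "dsic N k K P" "i \<in> N"
    and "valid_profile N k (B(i := x))" "valid_profile N k (B(i := y))"
    and "packed N k K (B(i := x)) i" "\<not> packed N k K (B(i := y)) i"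
  shows "y \<le> P (B(i := x)) i - P (B(i := y)) i"
    and "P (B(i := x)) i - P (B(i := y)) i \<le> x"
proof -
  have "payoff N k K P x (B(i := y)) i \<le> payoff N k K P x (B(i := x)) i"
    and "payoff N k K P y (B(i := x)) i \<le> payoff N k K P y (B(i := y)) i"
    using assms(1-4) unfolding dsic_def by blast+
  with assms(5,6) show "y \<le> P (B(i := x)) i - P (B(i := y)) i"
    and "P (B(i := x)) i - P (B(i := y)) i \<le> x"
    by (simp_all add: payoff_def)
qed

lemma payoff_up_payment:
  "payoff N k K (up_payment N k K) v B i =
     (if packed N k K B i then v - k i * clearing_price N k K B else 0)"
  by (simp add: payoff_def up_payment_def)

locale knapsack =
  fixes N :: "'a set" and k :: "'a \<Rightarrow> real" and K :: real
  assumes finite_bidders: "finite N"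
    and capacity_pos: "0 < K"
    and sizes_pos: "\<And>i. i \<in> N \<Longrightarrow> 0 < k i"
    and overdemand: "K < (\<Sum>i\<in>N. k i)"
begin

lemma packed_mono:
  assumes "packed N k K B i" "per_unit k B i \<le> per_unit k B j"
  shows "packed N k K B j"
proof -
  have "(\<Sum>l\<in>{l\<in>N. per_unit k B j \<le> per_unit k B l}. k l)
      \<le> (\<Sum>l\<in>{l\<in>N. per_unit k B i \<le> per_unit k B l}. k l)"
    using assms(2) finite_bidders sizes_pos by (intro sum_mono2) (auto intro: less_imp_le)
  with assms(1) show ?thesis unfolding packed_def by linarith
qed

lemma not_packed_lowest:
  assumes "\<forall>l\<in>N. per_unit k B i \<le> per_unit k B l"
  shows "\<not> packed N k K B i"
proof -
  have "{l\<in>N. per_unit k B i \<le> per_unit k B l} = N"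
    using assms by auto
  with overdemand show ?thesis unfolding packed_def by simp
qed

lemma exists_not_packed: "\<exists>j\<in>N. \<not> packed N k K B j"
proof -
  have "per_unit k B ` N \<noteq> {}"
    using overdemand capacity_pos by auto
  then have "Min (per_unit k B ` N) \<in> per_unit k B ` N"
    using finite_bidders by simp
  then obtain j where "j \<in> N" "per_unit k B j = Min (per_unit k B ` N)"
    by (metis imageE)
  then have "\<forall>l\<in>N. per_unit k B j \<le> per_unit k B l"
    using finite_bidders by simp
  with \<open>j \<in> N\<close> not_packed_lowest show ?thesis by blast
qed

lemma clearing_price_attained:
  obtains j where "j \<in> N" "\<not> packed N k K B j" "clearing_price N k K B = per_unit k B j"
proof -
  have "per_unit k B ` {j\<in>N. \<not> packed N k K B j} \<noteq> {}"
    using exists_not_packed by blast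
  then have "clearing_price N k K B \<in> per_unit k B ` {j\<in>N. \<not> packed N k K B j}"
    unfolding clearing_price_def using finite_bidders by (intro Max_in) auto
  with that show ?thesis by auto
qed

lemma per_unit_le_clearing_price:
  assumes "j \<in> N" "\<not> packed N k K B j"
  shows "per_unit k B j \<le> clearing_price N k K B"
  unfolding clearing_price_def using assms finite_bidders by (intro Max_ge) auto

lemma clearing_price_less_per_unit:
  assumes "packed N k K B i"
  shows "clearing_price N k K B < per_unit k B i"
proof -
  obtain j where "\<not> packed N k K B j" "clearing_price N k K B = per_unit k B j"
    by (rule clearing_price_attained)
  with assms packed_mono show ?thesis by (metis not_le)
qed

lemma sum_packed_le_capacity:
  assumes "i \<in> N" "packed N k K B i"
  shows "(\<Sum>l\<in>{l\<in>N. packed N k K B l}. k l) \<le> K"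
proof -
  let ?W = "{l\<in>N. packed N k K B l}"
  have "per_unit k B ` ?W \<noteq> {}" "finite (per_unit k B ` ?W)"
    using assms finite_bidders by auto
  then obtain m where m: "m \<in> ?W" "per_unit k B m = Min (per_unit k B ` ?W)"
    by (metis (no_types, lifting) Min_in imageE)
  then have "?W \<subseteq> {l\<in>N. per_unit k B m \<le> per_unit k B l}"
    using finite_bidders by auto
  then have "(\<Sum>l\<in>?W. k l) \<le> (\<Sum>l\<in>{l\<in>N. per_unit k B m \<le> per_unit k B l}. k l)"
    using finite_bidders sizes_pos by (intro sum_mono2) (auto intro: less_imp_le)
  with m(1) show ?thesis unfolding packed_def by simp
qed

text \<open>A packed bidder that moves its bid anywhere above the clearing price is ranked only
below bidders that were already packed, so it still fits.\<close>

lemma packed_update_above_clearing_price: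
  assumes "i \<in> N" "packed N k K B i" "clearing_price N k K B < x / k i"
  shows "packed N k K (B(i := x)) i"
proof -
  let ?S = "{l\<in>N. per_unit k (B(i := x)) i \<le> per_unit k (B(i := x)) l}"
  have "?S \<subseteq> {l\<in>N. packed N k K B l}"
  proof
    fix l assume l: "l \<in> ?S"
    show "l \<in> {l\<in>N. packed N k K B l}"
    proof (cases "l = i")
      case False
      with l assms(3) have "clearing_price N k K B < per_unit k B l"
        by (auto simp: per_unit_update)
      with l per_unit_le_clearing_price show ?thesis by force
    qed (use assms l in auto)
  qed
  then have "(\<Sum>l\<in>?S. k l) \<le> (\<Sum>l\<in>{l\<in>N. packed N k K B l}. k l)"
    using finite_bidders sizes_pos by (intro sum_mono2) (auto intro: less_imp_le)
  with sum_packed_le_capacity[OF assms(1,2)] show ?thesis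
    unfolding packed_def by linarith
qed

lemma not_packed_update_below_clearing_price:
  assumes "x / k i < clearing_price N k K B"
  shows "\<not> packed N k K (B(i := x)) i"
proof -
  obtain j where j: "\<not> packed N k K B j" "clearing_price N k K B = per_unit k B j"
    by (rule clearing_price_attained)
  have "{l\<in>N. per_unit k B j \<le> per_unit k B l}
      \<subseteq> {l\<in>N. per_unit k (B(i := x)) i \<le> per_unit k (B(i := x)) l}"
    using assms j(2) by (auto simp: per_unit_update)
  then have "(\<Sum>l\<in>{l\<in>N. per_unit k B j \<le> per_unit k B l}. k l)
      \<le> (\<Sum>l\<in>{l\<in>N. per_unit k (B(i := x)) i \<le> per_unit k (B(i := x)) l}. k l)"
    using finite_bidders sizes_pos by (intro sum_mono2) (auto intro: less_imp_le)
  with j(1) show ?thesis unfolding packed_def by linarith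
qed

text \<open>The bidder setting the clearing price stays below a bidder that remains packed,
so its rank, and hence its rejection, is unaffected by the move.\<close>

lemma clearing_price_update_le:
  assumes "i \<in> N" "packed N k K B i" "packed N k K (B(i := x)) i"
    and "inj_on (per_unit k (B(i := x))) N"
  shows "clearing_price N k K B \<le> clearing_price N k K (B(i := x))"
proof -
  obtain j where j: "j \<in> N" "\<not> packed N k K B j" "clearing_price N k K B = per_unit k B j"
    by (rule clearing_price_attained)
  have "j \<noteq> i" using j(2) assms(2) by auto
  have "per_unit k B j < per_unit k B i"
    using clearing_price_less_per_unit[OF assms(2)] j(3) by simp
  have "per_unit k B j \<le> x / k i"
    using not_packed_update_below_clearing_price assms(3) j(3) by force
  moreover have "per_unit k B j \<noteq> x / k i"
    using assms(1,4) j(1) \<open>j \<noteq> i\<close> unfolding inj_on_def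
    by (metis per_unit_update)
  ultimately have "per_unit k B j < x / k i" by simp
  with \<open>per_unit k B j < per_unit k B i\<close> \<open>j \<noteq> i\<close>
  have "{l\<in>N. per_unit k (B(i := x)) j \<le> per_unit k (B(i := x)) l}
      = {l\<in>N. per_unit k B j \<le> per_unit k B l}"
    by (auto simp: per_unit_update)
  with j(2) have "\<not> packed N k K (B(i := x)) j"
    unfolding packed_def by simp
  with j(1) have "per_unit k (B(i := x)) j \<le> clearing_price N k K (B(i := x))"
    by (rule per_unit_le_clearing_price)
  with j(3) \<open>j \<noteq> i\<close> show ?thesis by (simp add: per_unit_update)
qed

theorem up_payment_dsic: "dsic N k K (up_payment N k K)"
  unfolding dsic_def
proof (intro allI impI)
  fix B i v b
  assume i: "i \<in> N"
    and valid_v: "valid_profile N k (B(i := v))" and valid_b: "valid_profile N k (B(i := b))"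
  let ?Bv = "B(i := v)" and ?Bb = "B(i := b)"
  have "0 < k i" using sizes_pos i .
  show "payoff N k K (up_payment N k K) v ?Bb i \<le> payoff N k K (up_payment N k K) v ?Bv i"
  proof (cases "packed N k K ?Bb i"; cases "packed N k K ?Bv i")
    assume "packed N k K ?Bb i" "packed N k K ?Bv i"
    moreover have "clearing_price N k K ?Bb = clearing_price N k K ?Bv"
      using clearing_price_update_le[OF i \<open>packed N k K ?Bb i\<close>, of v]
        clearing_price_update_le[OF i \<open>packed N k K ?Bv i\<close>, of b]
        calculation valid_v valid_b
      unfolding valid_profile_def by simp
    ultimately show ?thesis by (simp add: payoff_up_payment)
  next
    assume "packed N k K ?Bb i" "\<not> packed N k K ?Bv i"
    then have "v / k i \<le> clearing_price N k K ?Bb"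
      using packed_update_above_clearing_price[OF i, of ?Bb v] by force
    then have "v \<le> k i * clearing_price N k K ?Bb"
      using \<open>0 < k i\<close> by (simp add: divide_le_eq mult.commute)
    with \<open>packed N k K ?Bb i\<close> \<open>\<not> packed N k K ?Bv i\<close> show ?thesis
      by (simp add: payoff_up_payment)
  next
    assume "\<not> packed N k K ?Bb i" "packed N k K ?Bv i"
    then have "clearing_price N k K ?Bv < v / k i"
      using clearing_price_less_per_unit[of ?Bv i] by (simp add: per_unit_update)
    then have "k i * clearing_price N k K ?Bv < v"
      using \<open>0 < k i\<close> by (simp add: less_divide_eq mult.commute)
    with \<open>\<not> packed N k K ?Bb i\<close> \<open>packed N k K ?Bv i\<close> show ?thesis
      by (simp add: payoff_up_payment)
  qed (simp add: payoff_up_payment)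
qed

lemma not_packed_zero_bid:
  assumes "valid_profile N k B" "B i = 0"
  shows "\<not> packed N k K B i"
proof (rule not_packed_lowest)
  show "\<forall>l\<in>N. per_unit k B i \<le> per_unit k B l"
    using assms sizes_pos unfolding valid_profile_def per_unit_def by (simp add: less_imp_le)
qed

lemma dsic_not_packed_pays_zero:
  assumes "dsic N k K P" "zero_bid_pays_zero N k P"
    and "valid_profile N k B" "i \<in> N" "\<forall>j\<in>N - {i}. 0 < B j" "\<not> packed N k K B i"
  shows "P B i = 0"
proof -
  have "\<forall>j\<in>N - {i}. 0 < per_unit k B j"
    using assms(5) sizes_pos by (simp add: per_unit_def)
  then have "0 / k i \<notin> per_unit k B ` (N - {i})"
    by force
  then have valid_0: "valid_profile N k (B(i := 0))"
    using valid_profile_update[OF assms(3)] by simp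
  have "P (B(i := B i)) i = P (B(i := 0)) i"
    using assms(1,3,4,6) valid_0 not_packed_zero_bid[OF valid_0]
    by (intro dsic_payment_eq_if_same_allocation) auto
  also have "\<dots> = 0"
    using assms(2,4) valid_0 unfolding zero_bid_pays_zero_def by simp
  finally show ?thesis by simp
qed

lemma dsic_packed_payment_le_accepted_bid:
  assumes "dsic N k K P" "zero_bid_pays_zero N k P" "i \<in> N"
    and "valid_profile N k B" "packed N k K B i"
    and "valid_profile N k (B(i := x))" "packed N k K (B(i := x)) i"
    and "valid_profile N k (B(i := 0))"
  shows "P B i \<le> x"
proof -
  have "P (B(i := x)) i = P (B(i := B i)) i"
    using assms(1,3,4,5,6,7) by (intro dsic_payment_eq_if_same_allocation) auto
  moreover have "P (B(i := 0)) i = 0"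
    using assms(2,3,8) unfolding zero_bid_pays_zero_def by simp
  moreover have "P (B(i := x)) i - P (B(i := 0)) i \<le> x"
    using dsic_payment_gap_between_bids(2)[OF assms(1,3,6,8,7)]
      not_packed_zero_bid[OF assms(8)] by simp
  ultimately show ?thesis by simp
qed

lemma dsic_packed_payment_ge_rejected_bid:
  assumes "dsic N k K P" "zero_bid_pays_zero N k P" "i \<in> N" "\<forall>j\<in>N - {i}. 0 < B j"
    and "valid_profile N k B" "packed N k K B i"
    and "valid_profile N k (B(i := x))" "\<not> packed N k K (B(i := x)) i"
  shows "x \<le> P B i"
proof -
  have "P (B(i := x)) i = 0"
    using dsic_not_packed_pays_zero[OF assms(1,2,7,3) _ assms(8)] assms(4) by simp
  moreover have "x \<le> P (B(i := B i)) i - P (B(i := x)) i"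
    using dsic_payment_gap_between_bids(1)[OF assms(1,3) _ assms(7) _ assms(8), of "B i"]
      assms(5,6) by simp
  ultimately show ?thesis by simp
qed

lemma dsic_packed_pays_clearing_price:
  assumes "dsic N k K P" "zero_bid_pays_zero N k P"
    and "valid_profile N k B" "i \<in> N" "\<forall>j\<in>N - {i}. 0 < B j" "packed N k K B i"
  shows "P B i = k i * clearing_price N k K B"
proof -
  define c where "c = clearing_price N k K B"
  define F where "F = (\<lambda>j. k i * per_unit k B j) ` (N - {i})"
  have "0 < k i" using sizes_pos assms(4) .
  have "\<forall>j\<in>N - {i}. 0 < k i * per_unit k B j"
    using assms(5) sizes_pos \<open>0 < k i\<close> by (simp add: per_unit_def)
  then have "0 \<notin> F"
    unfolding F_def by force
  have valid_bid: "valid_profile N k (B(i := x))" if "0 \<le> x" "x \<notin> F" for x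
  proof (rule valid_profile_update[OF assms(3) that(1)])
    show "x / k i \<notin> per_unit k B ` (N - {i})"
      using that(2) \<open>0 < k i\<close> unfolding F_def by (auto simp: field_simps)
  qed
  obtain j where j: "j \<in> N" "\<not> packed N k K B j" "c = per_unit k B j"
    unfolding c_def by (rule clearing_price_attained)
  then have "j \<noteq> i" using assms(6) by auto
  with j assms(5) sizes_pos have "0 < c" by (simp add: per_unit_def)
  have "P B i \<le> x" if "x \<notin> F" "k i * c < x" for x
  proof (rule dsic_packed_payment_le_accepted_bid[OF assms(1,2,4,3,6)])
    have "c < x / k i" using that(2) \<open>0 < k i\<close> by (simp add: less_divide_eq mult.commute)
    then show "packed N k K (B(i := x)) i"
      using packed_update_above_clearing_price[OF assms(4,6)] c_def by simp
    have "0 < x" using mult_pos_pos[OF \<open>0 < k i\<close> \<open>0 < c\<close>] that(2) by linarith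
    then show "valid_profile N k (B(i := x))" using valid_bid that(1) by simp
    show "valid_profile N k (B(i := 0))" using valid_bid \<open>0 \<notin> F\<close> by simp
  qed
  moreover have "x \<le> P B i" if "x \<notin> F" "0 < x" "x < k i * c" for x
  proof (rule dsic_packed_payment_ge_rejected_bid[OF assms(1,2,4,5,3,6)])
    show "valid_profile N k (B(i := x))" using valid_bid that(1,2) by simp
    have "x / k i < c" using that(3) \<open>0 < k i\<close> by (simp add: divide_less_eq mult.commute)
    then show "\<not> packed N k K (B(i := x)) i"
      using not_packed_update_below_clearing_price c_def by simp
  qed
  moreover have "finite F" "0 < k i * c"
    using finite_bidders \<open>0 < k i\<close> \<open>0 < c\<close> unfolding F_def by simp_all
  ultimately show ?thesis
    unfolding c_def[symmetric] by (intro eq_if_squeezed_off_finite) auto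
qed

theorem dsic_payment_unique:
  assumes "dsic N k K P" "zero_bid_pays_zero N k P"
    and "valid_profile N k B" "i \<in> N" "\<forall>j\<in>N - {i}. 0 < B j"
  shows "P B i = up_payment N k K B i"
  using dsic_packed_pays_clearing_price[OF assms] dsic_not_packed_pays_zero[OF assms]
  by (simp add: up_payment_def)

end

theorem proposition1:
  fixes N :: "'a set" and k :: "'a \<Rightarrow> real" and K :: real
  assumes "finite N"
    and "0 < K"
    and "\<forall>i\<in>N. 0 < k i \<and> k i < K"
    and "(\<Sum>i\<in>N. k i) > K"
  shows "dsic N k K (up_payment N k K) \<and>
         (\<forall>P. dsic N k K P \<and> zero_bid_pays_zero N k P \<longrightarrow>
            (\<forall>B i. valid_profile N k B \<and> i \<in> N \<and> (\<forall>j\<in>N - {i}. 0 < B j)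
                   \<longrightarrow> P B i = up_payment N k K B i))"
proof -
  interpret knapsack N k K
    using assms by unfold_locales auto
  show ?thesis
    using up_payment_dsic dsic_payment_unique by blast
qed

end
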